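(* If $x_1$ and $x_2$ are 4-cycles in the symmetric group $S_5$, then $(x_1x_2)^{15}=1$ or $(x_1x_2^2)^{15}=1$ or $(x_1x_2^3)^{15}=1$. *)

theory Defs
  imports "HOL-Combinatorics.Cycles"
begin

text \<open>The symmetric group S_5 is realised as the permutations of {1..5::nat}
  (functions nat => nat permuting {1..5}, identity elsewhere), with composition
  as group multiplication.\<close>

definition four_cycle_S5 :: "(nat \<Rightarrow> nat) \<Rightarrow> bool" where
  "four_cycle_S5 x \<longleftrightarrow>
     (\<exists>cs. cycle cs \<and> length cs = 4 \<and> set cs \<subseteq> {1..5} \<and> x = cycle_of_list cs)"

end

theory Submission
  imports Defs
begin

text \<open>A permutation of {1..5} is determined by its value table on [0..<6], and there are
  only 30 four-cycles in S_5, so the claim is a finite computation on tables. Only x1 x2 and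
  x1 x2^3 need to be examined: x1 x2^2 is an odd permutation, whose order (2, 4 or 6) never
  divides 15.\<close>

definition of_table :: "nat list \<Rightarrow> nat \<Rightarrow> nat" where
  "of_table t i = (if i < length t then t ! i else i)"

primrec table_pow :: "nat list \<Rightarrow> nat \<Rightarrow> nat list" where
  "table_pow t 0 = [0..<length t]"
| "table_pow t (Suc k) = map (of_table t) (table_pow t k)"

lemma length_table_pow [simp]: "length (table_pow t k) = length t"
  by (induction k) simp_all

lemma of_table_upt [simp]: "of_table [0..<n] = id"
  by (auto simp: of_table_def)

lemma of_table_map_upt:
  assumes "\<And>i. n \<le> i \<Longrightarrow> f i = i"
  shows "of_table (map f [0..<n]) = f"
  using assms by (auto simp: of_table_def not_less)

lemma of_table_comp:
  assumes "length t \<le> length s"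
  shows "of_table t \<circ> of_table s = of_table (map (of_table t) s)"
  using assms by (auto simp: of_table_def)

lemma of_table_funpow: "of_table t ^^ k = of_table (table_pow t k)"
  by (induction k) (simp_all add: of_table_comp)

lemma four_cycle_S5_fixes_outside:
  assumes "four_cycle_S5 x" and "i \<notin> {1..5}"
  shows "x i = i"
proof -
  obtain cs where "set cs \<subseteq> {1..5}" "x = cycle_of_list cs"
    using assms(1) unfolding four_cycle_S5_def by blast
  with assms(2) show ?thesis
    by (metis id_outside_supp subsetD)
qed

definition four_cycle_tables :: "nat list list" where
  "four_cycle_tables = remdups
     (map (\<lambda>cs. map (cycle_of_list cs) [0..<6]) (filter distinct (List.n_lists 4 [1..<6])))"

lemma four_cycle_S5_table_mem:
  assumes "four_cycle_S5 x"
  shows "map x [0..<6] \<in> set four_cycle_tables"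
proof -
  obtain cs where cs: "distinct cs" "length cs = 4" "set cs \<subseteq> {1..5}" "x = cycle_of_list cs"
    using assms unfolding four_cycle_S5_def by blast
  then have "cs \<in> set (filter distinct (List.n_lists 4 [1..<6]))"
    unfolding set_filter set_n_lists set_upt by auto
  then show ?thesis
    unfolding four_cycle_tables_def set_remdups set_map cs(4) by (rule imageI)
qed

definition product_order_dvd_15 :: "nat list \<Rightarrow> nat list \<Rightarrow> bool" where
  "product_order_dvd_15 t s \<longleftrightarrow>
     table_pow (map (of_table t) s) 15 = [0..<6] \<or>
     table_pow (map (of_table t) (table_pow s 3)) 15 = [0..<6]"

text \<open>Stated without a lambda so that code_simp unfolds \<^const>\<open>product_order_dvd_15\<close>
  only on concrete tables; symbolic unfolding under a binder blows up.\<close>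

definition product_order_dvd_15_all :: "nat list list \<Rightarrow> nat list \<Rightarrow> bool" where
  "product_order_dvd_15_all ss t \<longleftrightarrow> list_all (product_order_dvd_15 t) ss"

lemma product_order_dvd_15_four_cycle_tables:
  assumes "t \<in> set four_cycle_tables" and "s \<in> set four_cycle_tables"
  shows "product_order_dvd_15 t s"
proof -
  have "list_all (product_order_dvd_15_all four_cycle_tables) four_cycle_tables"
    by code_simp
  with assms show ?thesis
    by (simp add: product_order_dvd_15_all_def list_all_iff)
qed

theorem lemma3:
  fixes x1 x2 :: "nat \<Rightarrow> nat"
  assumes "four_cycle_S5 x1" and "four_cycle_S5 x2"
  shows "(x1 \<circ> x2) ^^ 15 = id \<or> (x1 \<circ> x2 ^^ 2) ^^ 15 = id \<or> (x1 \<circ> x2 ^^ 3) ^^ 15 = id"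
proof -
  define t s where "t = map x1 [0..<6]" and "s = map x2 [0..<6]"
  have x1: "x1 = of_table t" and x2: "x2 = of_table s"
    unfolding t_def s_def
    by (simp_all add: of_table_map_upt four_cycle_S5_fixes_outside assms)
  have "length t = 6" "length s = 6"
    by (simp_all add: t_def s_def)
  then have "(x1 \<circ> x2) ^^ 15 = of_table (table_pow (map (of_table t) s) 15)"
    and "(x1 \<circ> x2 ^^ 3) ^^ 15 = of_table (table_pow (map (of_table t) (table_pow s 3)) 15)"
    by (simp_all add: x1 x2 of_table_funpow of_table_comp)
  moreover have "product_order_dvd_15 t s"
    using product_order_dvd_15_four_cycle_tables four_cycle_S5_table_mem assms t_def s_def by blast
  ultimately show ?thesis
    by (auto simp: product_order_dvd_15_def)
qed

end
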